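(* Let $\varphi:[0,\infty)\to\mathbb{R}$ be a continuous function which is Lebesgue integrable on $(0,\infty)$, of bounded variation on $[0,\infty)$, and satisfies $\varphi(x)\to 0$ as $x\to\infty$. Define its Fourier–Stieltjes transform $$\Phi(t)=\int_0^\infty e^{ixt}\,d\varphi(x),\qquad t\in\mathbb{R}.$$ Then $\Phi(t)\to 0$ as $|t|\to\infty$ (i.e. $\varphi$ supports a Rajchman measure) if and only if $\Phi(t)$ has a finite limit as $|t|\to\infty$.
   Context: A function $\varphi$ of bounded variation is said to support a Rajchman measure if the Fourier–Stieltjes transform of the measure $d\varphi$ tends to zero at infinity. *)

theory Defs
  imports "HOL-Analysis.Analysis"
begin

definition has_bounded_variation_on :: "(real \<Rightarrow> real) \<Rightarrow> real set \<Rightarrow> bool" where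
  "has_bounded_variation_on f S \<longleftrightarrow>
     bdd_above {(\<Sum>i<n. \<bar>f (x (Suc i)) - f (x i)\<bar>) | x n.
                  (\<forall>i\<le>n. x i \<in> S) \<and> (\<forall>i<n. x i \<le> x (Suc i))}"

definition RS_sum :: "(real \<Rightarrow> complex) \<Rightarrow> (real \<Rightarrow> real) \<Rightarrow> (nat \<Rightarrow> real) \<Rightarrow> (nat \<Rightarrow> real) \<Rightarrow> nat \<Rightarrow> complex" where
  "RS_sum f g x \<xi> n = (\<Sum>i<n. f (\<xi> i) * complex_of_real (g (x (Suc i)) - g (x i)))"

definition has_RS_integral :: "(real \<Rightarrow> complex) \<Rightarrow> (real \<Rightarrow> real) \<Rightarrow> real \<Rightarrow> real \<Rightarrow> complex \<Rightarrow> bool" where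
  "has_RS_integral f g a b I \<longleftrightarrow>
     (\<forall>\<epsilon>>0. \<exists>\<delta>>0. \<forall>x \<xi> n. x 0 = a \<and> x n = b \<and>
        (\<forall>i<n. x i \<le> \<xi> i \<and> \<xi> i \<le> x (Suc i) \<and> x (Suc i) - x i < \<delta>) \<longrightarrow>
        norm (RS_sum f g x \<xi> n - I) < \<epsilon>)"

definition RS_integral :: "(real \<Rightarrow> complex) \<Rightarrow> (real \<Rightarrow> real) \<Rightarrow> real \<Rightarrow> real \<Rightarrow> complex" where
  "RS_integral f g a b = (THE I. has_RS_integral f g a b I)"

definition FS_transform :: "(real \<Rightarrow> real) \<Rightarrow> real \<Rightarrow> complex" where
  "FS_transform \<phi> t = Lim at_top (\<lambda>R. RS_integral (\<lambda>x. exp (\<i> * complex_of_real (x * t))) \<phi> 0 R)"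

end

theory Submission
  imports Defs "HOL-Probability.Sinc_Integral"
begin

text \<open>
  Integrating by parts, \<open>\<Phi>(t) = -\<phi>(0) - i t F(t)\<close>, where \<open>F(t)\<close> is the Lebesgue integral
  of \<open>\<phi>(x) exp(i x t)\<close> over \<open>(0, \<infinity>)\<close>. So if \<open>\<Phi>(t) \<longrightarrow> L\<close>, then \<open>t F(t) \<longrightarrow> c = i (L + \<phi>(0))\<close>,
  and so do its Abel means \<open>\<integral> exp(-s) (s n) F(s n) ds\<close> as \<open>n \<longrightarrow> \<infinity>\<close>. By Fubini and
  \<open>\<integral> s exp(-s) exp(i y s) ds = 1 / (1 - i y)\<^sup>2\<close>, these means equal \<open>\<integral> \<phi>(y/n) / (1 - i y)\<^sup>2 dy\<close>,
  which by dominated convergence tend to \<open>\<phi>(0) \<integral> 1 / (1 - i y)\<^sup>2 dy = i \<phi>(0)\<close>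
  (all integrals over \<open>(0, \<infinity>)\<close>). Hence \<open>c = i \<phi>(0)\<close>, i.e.\ \<open>L = 0\<close>.
\<close>

section \<open>Riemann--Stieltjes integration by parts\<close>

lemma chain_le:
  fixes x :: "nat \<Rightarrow> real"
  assumes "\<forall>i<n. x i \<le> x (Suc i)" "i \<le> j" "j \<le> n"
  shows "x i \<le> x j"
  by (rule lift_Suc_mono_le_ivl[of "{..<n}"]) (use assms in auto)

lemma sum_integral_chain:
  fixes x :: "nat \<Rightarrow> real" and h :: "real \<Rightarrow> 'a::banach"
  assumes "\<forall>i<n. x i \<le> x (Suc i)" "h integrable_on {x 0..x n}"
  shows "(\<Sum>i<n. integral {x i..x (Suc i)} h) = integral {x 0..x n} h"
  using assms
proof (induction n)
  case (Suc n)
  have le: "x 0 \<le> x n" "x n \<le> x (Suc n)"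
    using chain_le[OF Suc.prems(1), of 0 n] Suc.prems(1) by auto
  have "h integrable_on {x 0..x n}"
    by (rule integrable_on_subinterval[OF Suc.prems(2)]) (use le in auto)
  with Suc show ?case
    by (simp add: Henstock_Kurzweil_Integration.integral_combine[OF le Suc.prems(2)])
qed simp

lemma has_RS_integral_unique:
  assumes "a < b" "has_RS_integral f g a b I" "has_RS_integral f g a b J"
  shows "I = J"
proof (rule ccontr)
  assume "I \<noteq> J"
  then have e: "norm (I - J) / 2 > 0" by simp
  obtain d1 where "d1 > 0" and d1: "\<forall>x \<xi> n. x 0 = a \<and> x n = b \<and>
        (\<forall>i<n. x i \<le> \<xi> i \<and> \<xi> i \<le> x (Suc i) \<and> x (Suc i) - x i < d1) \<longrightarrow>
        norm (RS_sum f g x \<xi> n - I) < norm (I - J) / 2"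
    using assms(2)[unfolded has_RS_integral_def, rule_format, OF e] by blast
  obtain d2 where "d2 > 0" and d2: "\<forall>x \<xi> n. x 0 = a \<and> x n = b \<and>
        (\<forall>i<n. x i \<le> \<xi> i \<and> \<xi> i \<le> x (Suc i) \<and> x (Suc i) - x i < d2) \<longrightarrow>
        norm (RS_sum f g x \<xi> n - J) < norm (I - J) / 2"
    using assms(3)[unfolded has_RS_integral_def, rule_format, OF e] by blast
  obtain n :: nat where n: "(b - a) / min d1 d2 < n"
    using reals_Archimedean2 by blast
  have "n > 0"
    using n assms(1) \<open>d1 > 0\<close> \<open>d2 > 0\<close> by (cases n) (auto simp: divide_simps split: if_splits)
  have "b - a < min d1 d2 * n"
    using n \<open>d1 > 0\<close> \<open>d2 > 0\<close> by (simp add: pos_divide_less_eq mult.commute)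
  then have mesh: "(b - a) / n < min d1 d2"
    using \<open>n > 0\<close> by (metis pos_divide_less_eq of_nat_0_less_iff)
  define x where "x i = a + real i * ((b - a) / n)" for i
  have step: "x (Suc i) = x i + (b - a) / n" for i
    by (simp add: x_def distrib_right add_divide_distrib)
  have part: "x 0 = a" "x n = b" "\<forall>i<n. x i \<le> x i \<and> x i \<le> x (Suc i) \<and> x (Suc i) - x i < min d1 d2"
    using \<open>n > 0\<close> assms(1) mesh by (auto simp: step x_def[of 0] x_def[of n])
  have "norm (RS_sum f g x x n - I) < norm (I - J) / 2" "norm (RS_sum f g x x n - J) < norm (I - J) / 2"
    using d1 d2 part by auto
  then show False
    using dist_triangle3[of I J "RS_sum f g x x n"] by (simp add: dist_norm)
qed

lemma norm_integral_deviation_le: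
  fixes \<phi> :: "real \<Rightarrow> real" and E D :: "real \<Rightarrow> complex"
  assumes "p \<le> q"
    and E: "\<And>s. (E has_vector_derivative D s) (at s)"
    and D: "continuous_on UNIV D" "\<And>s. norm (D s) \<le> B"
    and \<phi>: "continuous_on {p..q} \<phi>" "\<And>s. s \<in> {p..q} \<Longrightarrow> \<bar>\<phi> s - c\<bar> \<le> \<eta>"
  shows "norm (of_real c * (E q - E p) - integral {p..q} (\<lambda>s. of_real (\<phi> s) * D s)) \<le> B * \<eta> * (q - p)"
proof -
  have "(D has_integral (E q - E p)) {p..q}"
    using \<open>p \<le> q\<close> by (intro fundamental_theorem_of_calculus) (auto intro: has_vector_derivative_at_within[OF E])
  moreover have "(\<lambda>s. of_real (\<phi> s) * D s) integrable_on {p..q}"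
    by (intro integrable_continuous_real continuous_intros \<phi>(1) continuous_on_subset[OF D(1)]) auto
  ultimately have "((\<lambda>s. of_real c * D s - of_real (\<phi> s) * D s) has_integral
      (of_real c * (E q - E p) - integral {p..q} (\<lambda>s. of_real (\<phi> s) * D s))) {p..q}"
    by (intro has_integral_diff has_integral_mult_right) (auto simp: has_integral_integral)
  then have "norm (of_real c * (E q - E p) - integral {p..q} (\<lambda>s. of_real (\<phi> s) * D s))
      \<le> (B * \<eta>) * measure lborel {p..q}"
  proof (rule has_integral_bound_real[where S="{}", rotated 2])
    have "B \<ge> 0"
      using D(2) norm_ge_zero order_trans by blast
    moreover have "\<bar>\<phi> p - c\<bar> \<le> \<eta>"
      using \<phi>(2) \<open>p \<le> q\<close> by simp
    ultimately show "0 \<le> B * \<eta>"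
      using abs_ge_zero order_trans by (blast intro: mult_nonneg_nonneg)
    fix s assume "s \<in> {p..q} - {}"
    have "norm (of_real c * D s - of_real (\<phi> s) * D s) = \<bar>c - \<phi> s\<bar> * norm (D s)"
      by (metis left_diff_distrib norm_mult norm_of_real of_real_diff)
    also have "\<dots> \<le> \<eta> * B"
      using \<open>s \<in> {p..q} - {}\<close> \<phi>(2)[of s] D(2)[of s] by (intro mult_mono) (auto simp: abs_minus_commute)
    finally show "norm (of_real c * D s - of_real (\<phi> s) * D s) \<le> B * \<eta>"
      by (simp add: mult.commute)
  qed simp
  then show ?thesis using \<open>p \<le> q\<close> by simp
qed

lemma RS_cell_estimate:
  fixes \<phi> :: "real \<Rightarrow> real" and E D :: "real \<Rightarrow> complex"
  assumes "u \<le> \<xi>" "\<xi> \<le> v"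
    and E: "\<And>s. (E has_vector_derivative D s) (at s)"
    and D: "continuous_on UNIV D" "\<And>s. norm (D s) \<le> B"
    and \<phi>: "continuous_on {u..v} \<phi>"
      "\<And>s. s \<in> {u..v} \<Longrightarrow> \<bar>\<phi> s - \<phi> u\<bar> \<le> \<eta> \<and> \<bar>\<phi> s - \<phi> v\<bar> \<le> \<eta>"
  shows "norm (E v * of_real (\<phi> v) - E u * of_real (\<phi> u) - E \<xi> * of_real (\<phi> v - \<phi> u)
          - integral {u..v} (\<lambda>s. of_real (\<phi> s) * D s)) \<le> B * \<eta> * (v - u)"
proof -
  let ?I = "\<lambda>p q. integral {p..q} (\<lambda>s. of_real (\<phi> s) * D s)"
  have left: "norm (of_real (\<phi> u) * (E \<xi> - E u) - ?I u \<xi>) \<le> B * \<eta> * (\<xi> - u)"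
    by (rule norm_integral_deviation_le[OF \<open>u \<le> \<xi>\<close> E D])
       (use \<phi> \<open>\<xi> \<le> v\<close> in \<open>auto intro: continuous_on_subset\<close>)
  have right: "norm (of_real (\<phi> v) * (E v - E \<xi>) - ?I \<xi> v) \<le> B * \<eta> * (v - \<xi>)"
    by (rule norm_integral_deviation_le[OF \<open>\<xi> \<le> v\<close> E D])
       (use \<phi> \<open>u \<le> \<xi>\<close> in \<open>auto intro: continuous_on_subset\<close>)
  have "?I u \<xi> + ?I \<xi> v = ?I u v"
    by (intro Henstock_Kurzweil_Integration.integral_combine assms integrable_continuous_real
        continuous_intros \<phi>(1) continuous_on_subset[OF D(1)]) auto
  then have "E v * of_real (\<phi> v) - E u * of_real (\<phi> u) - E \<xi> * of_real (\<phi> v - \<phi> u) - ?I u v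
      = (of_real (\<phi> u) * (E \<xi> - E u) - ?I u \<xi>) + (of_real (\<phi> v) * (E v - E \<xi>) - ?I \<xi> v)"
    by (simp add: algebra_simps)
  also have "norm \<dots> \<le> B * \<eta> * (\<xi> - u) + B * \<eta> * (v - \<xi>)"
    using left right by (rule norm_triangle_le[OF add_mono])
  finally show ?thesis by (simp add: algebra_simps)
qed

lemma RS_sum_by_parts_error:
  fixes \<phi> :: "real \<Rightarrow> real" and E D :: "real \<Rightarrow> complex"
  assumes E: "\<And>s. (E has_vector_derivative D s) (at s)"
    and D: "continuous_on UNIV D" "\<And>s. norm (D s) \<le> B"
    and \<phi>: "continuous_on {a..b} \<phi>"
    and part: "x 0 = a" "x n = b" "\<forall>i<n. x i \<le> \<xi> i \<and> \<xi> i \<le> x (Suc i)"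
    and osc: "\<And>i s. i < n \<Longrightarrow> s \<in> {x i..x (Suc i)} \<Longrightarrow>
                \<bar>\<phi> s - \<phi> (x i)\<bar> \<le> \<eta> \<and> \<bar>\<phi> s - \<phi> (x (Suc i))\<bar> \<le> \<eta>"
  shows "norm (RS_sum E \<phi> x \<xi> n - (E b * of_real (\<phi> b) - E a * of_real (\<phi> a)
          - integral {a..b} (\<lambda>s. of_real (\<phi> s) * D s))) \<le> B * \<eta> * (b - a)"
proof -
  let ?h = "\<lambda>s. of_real (\<phi> s) * D s"
  define T where "T i = E (x (Suc i)) * of_real (\<phi> (x (Suc i))) - E (x i) * of_real (\<phi> (x i))
      - E (\<xi> i) * of_real (\<phi> (x (Suc i)) - \<phi> (x i)) - integral {x i..x (Suc i)} ?h" for i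
  have mono: "\<forall>i<n. x i \<le> x (Suc i)"
    using part(3) by force
  have cell: "{x i..x (Suc i)} \<subseteq> {a..b}" if "i < n" for i
    using chain_le[OF mono, of 0 i] chain_le[OF mono, of "Suc i" n] that part(1,2) by auto
  have T: "norm (T i) \<le> B * \<eta> * (x (Suc i) - x i)" if "i < n" for i
    unfolding T_def using part(3) that cell[OF that]
    by (intro RS_cell_estimate E D osc continuous_on_subset[OF \<phi>]) auto
  have "(\<Sum>i<n. T i) = (\<Sum>i<n. E (x (Suc i)) * of_real (\<phi> (x (Suc i))) - E (x i) * of_real (\<phi> (x i)))
      - RS_sum E \<phi> x \<xi> n - (\<Sum>i<n. integral {x i..x (Suc i)} ?h)"
    unfolding T_def RS_sum_def by (simp add: sum_subtractf)
  also have "\<dots> = E b * of_real (\<phi> b) - E a * of_real (\<phi> a) - RS_sum E \<phi> x \<xi> n - integral {a..b} ?h"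
    using part(1,2) mono \<phi> sum_lessThan_telescope[of "\<lambda>i. E (x i) * of_real (\<phi> (x i))"]
    by (simp add: sum_integral_chain integrable_continuous_real
        continuous_intros continuous_on_subset[OF D(1)])
  finally have "RS_sum E \<phi> x \<xi> n - (E b * of_real (\<phi> b) - E a * of_real (\<phi> a) - integral {a..b} ?h)
      = - (\<Sum>i<n. T i)"
    by (simp add: algebra_simps)
  moreover have "norm (\<Sum>i<n. T i) \<le> (\<Sum>i<n. B * \<eta> * (x (Suc i) - x i))"
    using T by (intro sum_norm_le) auto
  moreover have "(\<Sum>i<n. B * \<eta> * (x (Suc i) - x i)) = B * \<eta> * (b - a)"
    using part(1,2) by (simp add: sum_distrib_left[symmetric] sum_lessThan_telescope)
  ultimately show ?thesis by simp
qed

lemma has_RS_integral_by_parts: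
  fixes \<phi> :: "real \<Rightarrow> real" and E D :: "real \<Rightarrow> complex"
  assumes "a < b"
    and E: "\<And>s. (E has_vector_derivative D s) (at s)"
    and D: "continuous_on UNIV D" "\<And>s. norm (D s) \<le> B"
    and \<phi>: "continuous_on {a..b} \<phi>"
  shows "has_RS_integral E \<phi> a b
           (E b * of_real (\<phi> b) - E a * of_real (\<phi> a) - integral {a..b} (\<lambda>s. of_real (\<phi> s) * D s))"
  unfolding has_RS_integral_def
proof (intro allI impI)
  fix \<epsilon> :: real assume "\<epsilon> > 0"
  have "B \<ge> 0" using D(2) norm_ge_zero order_trans by blast
  define K where "K = B * (b - a)"
  define \<eta> where "\<eta> = \<epsilon> / (2 * (K + 1))"
  have "K \<ge> 0"
    using \<open>B \<ge> 0\<close> \<open>a < b\<close> by (simp add: K_def)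
  then have "\<eta> > 0" "K * \<eta> < \<epsilon>"
    using \<open>\<epsilon> > 0\<close> by (auto simp: \<eta>_def field_simps add_nonneg_pos)
  then have "B * \<eta> * (b - a) < \<epsilon>"
    by (simp add: K_def mult_ac)
  obtain \<delta> where "\<delta> > 0" and \<delta>: "\<And>s s'. s \<in> {a..b} \<Longrightarrow> s' \<in> {a..b} \<Longrightarrow> dist s' s < \<delta> \<Longrightarrow>
      dist (\<phi> s') (\<phi> s) < \<eta>"
    using compact_uniformly_continuous[OF \<phi> compact_Icc] \<open>\<eta> > 0\<close>
    unfolding uniformly_continuous_on_def by metis
  show "\<exists>\<delta>>0. \<forall>x \<xi> n. x 0 = a \<and> x n = b \<and>
        (\<forall>i<n. x i \<le> \<xi> i \<and> \<xi> i \<le> x (Suc i) \<and> x (Suc i) - x i < \<delta>) \<longrightarrow>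
        norm (RS_sum E \<phi> x \<xi> n - (E b * of_real (\<phi> b) - E a * of_real (\<phi> a)
          - integral {a..b} (\<lambda>s. of_real (\<phi> s) * D s))) < \<epsilon>"
  proof (intro exI[of _ \<delta>] conjI allI impI \<open>\<delta> > 0\<close>)
    fix x \<xi> :: "nat \<Rightarrow> real" and n :: nat
    assume part: "x 0 = a \<and> x n = b \<and> (\<forall>i<n. x i \<le> \<xi> i \<and> \<xi> i \<le> x (Suc i) \<and> x (Suc i) - x i < \<delta>)"
    have mono: "\<forall>i<n. x i \<le> x (Suc i)"
      using part by force
    have osc: "\<bar>\<phi> s - \<phi> (x i)\<bar> \<le> \<eta> \<and> \<bar>\<phi> s - \<phi> (x (Suc i))\<bar> \<le> \<eta>"
      if "i < n" "s \<in> {x i..x (Suc i)}" for i s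
    proof -
      have "x i \<in> {a..b}" "x (Suc i) \<in> {a..b}"
        using chain_le[OF mono, of 0] chain_le[OF mono, of _ n] part that(1) by auto
      then show ?thesis
        using that part \<delta>[of "x i" s] \<delta>[of s "x (Suc i)"] by (auto simp: dist_real_def abs_minus_commute)
    qed
    have "norm (RS_sum E \<phi> x \<xi> n - (E b * of_real (\<phi> b) - E a * of_real (\<phi> a)
          - integral {a..b} (\<lambda>s. of_real (\<phi> s) * D s))) \<le> B * \<eta> * (b - a)"
      using part by (intro RS_sum_by_parts_error[OF E D \<phi>] osc) auto
    with \<open>B * \<eta> * (b - a) < \<epsilon>\<close> show "norm (RS_sum E \<phi> x \<xi> n - (E b * of_real (\<phi> b) - E a * of_real (\<phi> a)
          - integral {a..b} (\<lambda>s. of_real (\<phi> s) * D s))) < \<epsilon>"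
      by linarith
  qed
qed

lemma set_borel_measurable_continuous:
  fixes g :: "real \<Rightarrow> 'a::real_normed_vector"
  assumes "A \<in> sets borel" "continuous_on UNIV g"
  shows "set_borel_measurable lborel A g"
  unfolding set_borel_measurable_def
  using borel_measurable_continuous_on_indicator[OF assms(1) continuous_on_subset[OF assms(2)]] by simp

lemma set_integral_exp_neg:
  shows "set_integrable lborel {0<..} (\<lambda>s::real. exp (-s))"
    and "(LINT s:{0<..}|lborel. exp (-s::real)) = 1"
proof -
  have d: "((\<lambda>s. - exp (-s)) has_real_derivative exp (-x)) (at x)" for x :: real
    by (auto intro!: derivative_eq_intros)
  have l1: "(((\<lambda>s. - exp (-s)) \<circ> real_of_ereal) \<longlongrightarrow> -1) (at_right 0)"
    unfolding zero_ereal_def ereal_tendsto_simps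
    by (rule tendsto_eq_intros refl | simp)+
  have l2: "(((\<lambda>s::real. - exp (-s)) \<circ> real_of_ereal) \<longlongrightarrow> 0) (at_left \<infinity>)"
    unfolding ereal_tendsto_simps by real_asymp
  note * = interval_integral_FTC_nonneg[where F="\<lambda>s. - exp (-s)" and f="\<lambda>s. exp (-s)" and a=0 and b=\<infinity>
     and A="-1" and B=0, OF _ d _ _ l1 l2]
  from * show "set_integrable lborel {0<..} (\<lambda>s::real. exp (-s))"
    by (simp add: zero_ereal_def)
  from * show "(LINT s:{0<..}|lborel. exp (-s::real)) = 1"
    using interval_lebesgue_integral_0_infty(2)[of lborel "\<lambda>s. exp (-s)"] by simp
qed

lemma set_integrable_mult_exp_neg:
  shows "set_integrable lborel {0<..} (\<lambda>s::real. s * exp (-s))"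
proof -
  have *: "set_integrable lborel (einterval 0 \<infinity>) (\<lambda>s::real. s * exp (-s))"
  proof (rule interval_integral_FTC_nonneg[where F="\<lambda>s. - (s + 1) * exp (-s)"])
    show "((\<lambda>s. - (s + 1) * exp (-s)) has_real_derivative x * exp (-x)) (at x)" for x
      by (auto intro!: derivative_eq_intros simp: algebra_simps)
    show "(((\<lambda>s. - (s + 1) * exp (-s)) \<circ> real_of_ereal) \<longlongrightarrow> -1) (at_right 0)"
      unfolding zero_ereal_def ereal_tendsto_simps
      by (rule tendsto_eq_intros refl | simp)+
    show "(((\<lambda>s. - (s + 1) * exp (-s)) \<circ> real_of_ereal) \<longlongrightarrow> 0) (at_left \<infinity>)"
      unfolding ereal_tendsto_simps by real_asymp
    show "AE x in lborel. 0 < ereal x \<longrightarrow> ereal x < \<infinity> \<longrightarrow> 0 \<le> x * exp (- x)"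
      by (intro AE_I2) auto
  qed auto
  then show ?thesis by (simp add: zero_ereal_def)
qed

lemma set_integrable_mult_exp_complex:
  fixes a :: complex
  assumes "Re a \<le> -1"
  shows "set_integrable lborel {0<..} (\<lambda>s. of_real s * exp (a * of_real s))"
proof (rule set_integrable_bound[OF set_integrable_mult_exp_neg set_borel_measurable_continuous])
  show "AE s in lborel. s \<in> {0<..} \<longrightarrow> norm (of_real s * exp (a * of_real s)) \<le> norm (s * exp (- s))"
    using assms mult_right_mono[OF assms, of s for s] by (intro AE_I2) (auto simp: norm_mult intro!: mult_left_mono)
qed (auto intro!: continuous_intros)

lemma norm_mult_exp_complex_antiderivative_le:
  fixes a :: complex
  assumes "Re a \<le> -1" "s \<ge> 0"
  shows "norm (exp (a * of_real s) * (of_real s / a - 1 / a^2)) \<le> exp (-s) * (s + 1)"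
proof -
  have "norm a \<ge> 1"
    using abs_Re_le_cmod[of a] assms(1) by simp
  have "norm (of_real s / a - 1 / a^2) \<le> norm (of_real s / a) + norm (1 / a^2)"
    by (rule norm_triangle_ineq4)
  also have "norm (of_real s / a) \<le> s"
    using \<open>s \<ge> 0\<close> \<open>norm a \<ge> 1\<close> by (simp add: norm_divide divide_le_eq mult_le_cancel_left1)
  also have "norm (1 / a^2) \<le> 1"
    using \<open>norm a \<ge> 1\<close> by (simp add: norm_divide norm_power divide_le_eq one_le_power)
  finally have "norm (of_real s / a - 1 / a^2) \<le> s + 1"
    by simp
  moreover have "norm (exp (a * of_real s)) \<le> exp (-s)"
    using mult_right_mono[OF assms] by simp
  ultimately show ?thesis
    unfolding norm_mult by (intro mult_mono) auto
qed

lemma set_integral_mult_exp_complex: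
  fixes a :: complex
  assumes "Re a \<le> -1"
  shows "(LINT s:{0<..}|lborel. of_real s * exp (a * of_real s)) = 1 / a^2"
proof -
  have "a \<noteq> 0"
  proof
    assume "a = 0"
    with assms show False by simp
  qed
  define P where "P z = exp (a * z) * (z / a - 1 / a^2)" for z
  have P': "(P has_field_derivative z * exp (a * z)) (at z)" for z
  proof -
    have "(P has_field_derivative exp (a * z) * a * (z / a - 1 / a^2) + exp (a * z) * (1 / a)) (at z)"
      unfolding P_def using \<open>a \<noteq> 0\<close> by (auto intro!: derivative_eq_intros)
    also have "exp (a * z) * a * (z / a - 1 / a^2) + exp (a * z) * (1 / a) = z * exp (a * z)"
      using \<open>a \<noteq> 0\<close> by (simp add: field_simps power2_eq_square)
    finally show ?thesis .
  qed
  have "(LBINT s=0..\<infinity>. of_real s * exp (a * of_real s)) = 0 - P 0"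
  proof (rule interval_integral_FTC_integrable[where F="\<lambda>s. P (of_real s)"])
    show "((\<lambda>s. P (of_real s)) has_vector_derivative of_real x * exp (a * of_real x)) (at x)" for x
      using has_vector_derivative_real_field[OF P'[of "of_real x"]] by simp
    show "set_integrable lborel (einterval 0 \<infinity>) (\<lambda>s. of_real s * exp (a * of_real s))"
      using set_integrable_mult_exp_complex[OF assms] by (simp add: zero_ereal_def)
    have "isCont (\<lambda>s. P (of_real s)) 0"
      unfolding P_def using \<open>a \<noteq> 0\<close> by (intro continuous_intros)
    then show "(((\<lambda>s. P (of_real s)) \<circ> real_of_ereal) \<longlongrightarrow> P 0) (at_right 0)"
      unfolding zero_ereal_def ereal_tendsto_simps
      by (simp add: filterlim_at_split isCont_def)
    show "(((\<lambda>s. P (of_real s)) \<circ> real_of_ereal) \<longlongrightarrow> 0) (at_left \<infinity>)"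
      unfolding ereal_tendsto_simps
    proof (rule Lim_null_comparison)
      show "\<forall>\<^sub>F s in at_top. norm (P (of_real s)) \<le> exp (- s) * (s + 1)"
        using eventually_ge_at_top[of 0]
        by eventually_elim (use norm_mult_exp_complex_antiderivative_le[OF assms] in \<open>simp add: P_def\<close>)
      show "((\<lambda>s::real. exp (-s) * (s + 1)) \<longlongrightarrow> 0) at_top"
        by real_asymp
    qed
  qed auto
  then show ?thesis
    by (simp add: P_def interval_lebesgue_integral_0_infty(2))
qed

lemma set_integral_mult_exp_neg_exp_ii:
  "(LINT s:{0<..}|lborel. of_real (s * exp (-s)) * exp (\<i> * of_real (y * s))) = 1 / (1 - \<i> * of_real y)^2"
proof -
  define a where "a = \<i> * of_real y - 1"
  have "exp (a * of_real s) = exp (- of_real s) * exp (\<i> * of_real (y * s))" for s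
    by (simp add: a_def algebra_simps flip: exp_add)
  then have "(\<lambda>s. of_real (s * exp (-s)) * exp (\<i> * of_real (y * s))) = (\<lambda>s. of_real s * exp (a * of_real s))"
    by (simp add: mult.assoc flip: exp_of_real)
  moreover have "1 / a^2 = 1 / (1 - \<i> * of_real y)^2"
    by (simp add: a_def power2_eq_square algebra_simps)
  ultimately show ?thesis
    using set_integral_mult_exp_complex[of a] by (simp add: a_def)
qed

lemma norm_inverse_square_one_minus_ii: "norm (1 / (1 - \<i> * of_real y)^2) = inverse (1 + y^2)"
proof -
  have "1 - \<i> * of_real y = Complex 1 (-y)"
    by (simp add: complex_eq_iff)
  then have "norm (1 - \<i> * of_real y) ^ 2 = 1 + y^2"
    by (simp add: cmod_def)
  then show ?thesis
    by (simp add: norm_divide norm_power divide_inverse norm_inverse)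
qed

lemma one_minus_ii_of_real_nonzero: "z \<in> \<real> \<Longrightarrow> 1 - \<i> * z \<noteq> 0"
  by (auto simp: complex_eq_iff elim!: Reals_cases)

lemma set_integrable_inverse_square_one_minus_ii:
  "set_integrable lborel {0<..} (\<lambda>y. 1 / (1 - \<i> * of_real y)^2)"
proof (rule set_integrable_bound[OF _ set_borel_measurable_continuous])
  show "set_integrable lborel {0<..} (\<lambda>x::real. inverse (1 + x^2))"
    using set_integrable_subset[OF integrable_inverse_1_plus_square] by simp
  show "continuous_on UNIV (\<lambda>y. 1 / (1 - \<i> * of_real y)^2)"
    by (intro continuous_intros) (auto simp: one_minus_ii_of_real_nonzero)
qed (simp_all add: norm_inverse_square_one_minus_ii)

lemma set_integral_inverse_square_one_minus_ii:
  "(LINT y:{0<..}|lborel. 1 / (1 - \<i> * of_real y)^2) = \<i>"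
proof -
  define Q where "Q z = - \<i> / (1 - \<i> * z)" for z
  have Q': "(Q has_field_derivative 1 / (1 - \<i> * z)^2) (at z)" if "z \<in> \<real>" for z
  proof -
    have "(Q has_field_derivative - (- \<i> * - \<i>) / (1 - \<i> * z)^2) (at z)"
      unfolding Q_def using one_minus_ii_of_real_nonzero[OF that]
      by (auto intro!: derivative_eq_intros simp: power2_eq_square divide_simps)
    then show ?thesis by simp
  qed
  have "(LBINT y=0..\<infinity>. 1 / (1 - \<i> * of_real y)^2) = 0 - Q 0"
  proof (rule interval_integral_FTC_integrable[where F="\<lambda>s. Q (of_real s)"])
    show "((\<lambda>s. Q (of_real s)) has_vector_derivative 1 / (1 - \<i> * of_real x)^2) (at x)" for x
      using has_vector_derivative_real_field[OF Q'[of "of_real x"]] by simp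
    show "isCont (\<lambda>y. 1 / (1 - \<i> * of_real y)^2) x" for x
      by (intro continuous_intros) (simp add: one_minus_ii_of_real_nonzero)
    show "set_integrable lborel (einterval 0 \<infinity>) (\<lambda>y. 1 / (1 - \<i> * of_real y)^2)"
      using set_integrable_inverse_square_one_minus_ii by (simp add: zero_ereal_def)
    show "(((\<lambda>s. Q (of_real s)) \<circ> real_of_ereal) \<longlongrightarrow> Q 0) (at_right 0)"
      unfolding zero_ereal_def ereal_tendsto_simps Q_def
      by (rule tendsto_eq_intros refl | simp)+
    show "(((\<lambda>s. Q (of_real s)) \<circ> real_of_ereal) \<longlongrightarrow> 0) (at_left \<infinity>)"
      unfolding ereal_tendsto_simps
    proof (rule Lim_null_comparison)
      have bound: "norm (Q (of_real s)) \<le> 1 / s" if "s > 0" for s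
      proof -
        have "s \<le> norm (1 - \<i> * of_real s)"
          using abs_Im_le_cmod[of "1 - \<i> * of_real s"] that by simp
        then show ?thesis
          using that by (simp add: Q_def norm_divide divide_le_eq field_simps)
      qed
      show "\<forall>\<^sub>F s in at_top. norm (Q (of_real s)) \<le> 1 / s"
        using eventually_gt_at_top[of 0] by (rule eventually_mono) (rule bound)
      show "((\<lambda>s::real. 1 / s) \<longlongrightarrow> 0) at_top"
        by real_asymp
    qed
  qed simp
  then show ?thesis
    by (simp add: Q_def interval_lebesgue_integral_0_infty(2))
qed

section \<open>The Fourier transform on the half line\<close>

definition half_line_Fourier :: "(real \<Rightarrow> real) \<Rightarrow> real \<Rightarrow> complex" where
  "half_line_Fourier \<psi> t = (LINT x:{0<..}|lborel. of_real (\<psi> x) * exp (\<i> * of_real (x * t)))"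

lemma has_vector_derivative_exp_ii_mult:
  "((\<lambda>x. exp (\<i> * of_real (x * t))) has_vector_derivative (\<i> * of_real t * exp (\<i> * of_real (s * t)))) (at s)"
proof -
  have "((\<lambda>z. exp (\<i> * (z * of_real t))) has_field_derivative
     (\<i> * of_real t * exp (\<i> * (of_real s * of_real t)))) (at (of_real s))"
    by (auto intro!: derivative_eq_intros simp: algebra_simps)
  from has_vector_derivative_real_field[OF this] show ?thesis by simp
qed

lemma set_integrable_mult_exp_ii:
  fixes \<psi> :: "real \<Rightarrow> real"
  assumes "set_integrable lborel A \<psi>"
  shows "set_integrable lborel A (\<lambda>x. of_real (\<psi> x) * exp (\<i> * of_real (x * t)))"
proof (rule set_integrable_bound[OF assms], unfold set_borel_measurable_def)
  have "(\<lambda>x. indicator A x *\<^sub>R \<psi> x) \<in> borel_measurable lborel"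
    using assms unfolding set_integrable_def by (rule borel_measurable_integrable)
  then have "(\<lambda>x. of_real (indicator A x *\<^sub>R \<psi> x) * exp (\<i> * of_real (x * t))) \<in> borel_measurable lborel"
    by measurable
  then show "(\<lambda>x. indicator A x *\<^sub>R (of_real (\<psi> x) * exp (\<i> * of_real (x * t)))) \<in> borel_measurable lborel"
    by (rule measurable_cong[THEN iffD1, rotated]) (auto simp: indicator_def)
qed (auto simp: norm_mult)

lemma norm_half_line_Fourier_le:
  assumes "set_integrable lborel {0<..} \<psi>"
  shows "norm (half_line_Fourier \<psi> t) \<le> (LINT x:{0<..}|lborel. \<bar>\<psi> x\<bar>)"
  unfolding half_line_Fourier_def
  using set_integral_norm_bound[OF set_integrable_mult_exp_ii[OF assms]] by (simp add: norm_mult)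

lemma half_line_Fourier_measurable:
  assumes [measurable]: "\<psi> \<in> borel_measurable borel"
  shows "half_line_Fourier \<psi> \<in> borel_measurable borel"
proof -
  have "(\<lambda>t. \<integral>x. indicator {0<..} x *\<^sub>R (complex_of_real (\<psi> x) * exp (\<i> * complex_of_real (x * t))) \<partial>lborel)
      \<in> borel_measurable borel"
    by (rule lborel.borel_measurable_lebesgue_integral) measurable
  then show ?thesis unfolding half_line_Fourier_def[abs_def] set_lebesgue_integral_def .
qed

lemma half_line_Fourier_scale:
  assumes "m > 0"
  shows "half_line_Fourier \<psi> (s * m) = (1/m) *\<^sub>R half_line_Fourier (\<lambda>y. \<psi> (y / m)) s"
proof -
  define g where "g x = indicator {0<..} x *\<^sub>R (of_real (\<psi> x) * exp (\<i> * of_real (x * (s * m))))" for x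
  have "half_line_Fourier \<psi> (s * m) = (\<integral>x. g x \<partial>lborel)"
    unfolding half_line_Fourier_def set_lebesgue_integral_def g_def ..
  also have "\<dots> = \<bar>1/m\<bar> *\<^sub>R (\<integral>y. g (0 + 1/m * y) \<partial>lborel)"
    using assms by (intro lborel_integral_real_affine) simp
  also have "(\<lambda>y. g (0 + 1/m * y)) = (\<lambda>y. indicator {0<..} y *\<^sub>R (of_real (\<psi> (y / m)) * exp (\<i> * of_real (y * s))))"
    using assms by (auto simp: g_def indicator_def zero_less_mult_iff zero_less_divide_iff fun_eq_iff)
  finally show ?thesis
    using assms unfolding half_line_Fourier_def set_lebesgue_integral_def by simp
qed

lemma RS_integral_exp_ii:
  fixes \<phi> :: "real \<Rightarrow> real"
  assumes "R > 0" "continuous_on {0..R} \<phi>"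
  shows "RS_integral (\<lambda>x. exp (\<i> * of_real (x * t))) \<phi> 0 R =
           exp (\<i> * of_real (R * t)) * of_real (\<phi> R) - of_real (\<phi> 0)
           - \<i> * of_real t * (LINT s:{0..R}|lborel. of_real (\<phi> s) * exp (\<i> * of_real (s * t)))"
proof -
  let ?g = "\<lambda>s. of_real (\<phi> s) * exp (\<i> * of_real (s * t))"
  have "continuous_on {0..R} ?g"
    by (intro continuous_intros assms(2))
  then have "integral {0..R} (\<lambda>s. of_real (\<phi> s) * (\<i> * of_real t * exp (\<i> * of_real (s * t))))
      = \<i> * of_real t * (LINT s:{0..R}|lborel. ?g s)"
    by (simp add: set_borel_integral_eq_integral(2)[OF borel_integrable_atLeastAtMost'] mult.left_commute
        flip: integral_mult_right)
  moreover have "continuous_on UNIV (\<lambda>s. \<i> * of_real t * exp (\<i> * of_real (s * t)))"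
    by (intro continuous_intros)
  then have "has_RS_integral (\<lambda>x. exp (\<i> * of_real (x * t))) \<phi> 0 R
      (exp (\<i> * of_real (R * t)) * of_real (\<phi> R) - of_real (\<phi> 0)
       - integral {0..R} (\<lambda>s. of_real (\<phi> s) * (\<i> * of_real t * exp (\<i> * of_real (s * t)))))"
    using has_RS_integral_by_parts[OF assms(1) has_vector_derivative_exp_ii_mult _ _ assms(2), where B="\<bar>t\<bar>"]
    by (simp add: norm_mult)
  ultimately show ?thesis
    unfolding RS_integral_def using has_RS_integral_unique[OF assms(1)] by (simp add: the_equality)
qed

lemma FS_transform_eq_half_line_Fourier:
  fixes \<phi> :: "real \<Rightarrow> real"
  assumes \<phi>: "continuous_on {0..} \<phi>" "set_integrable lborel {0<..} \<phi>" "(\<phi> \<longlongrightarrow> 0) at_top"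
  shows "FS_transform \<phi> t = - of_real (\<phi> 0) - \<i> * of_real t * half_line_Fourier \<phi> t"
proof -
  let ?g = "\<lambda>s. of_real (\<phi> s) * exp (\<i> * of_real (s * t))"
  have int: "set_integrable lborel {0..} ?g"
    using set_integrable_mult_exp_ii[OF \<phi>(2), of t]
    by (subst set_integrable_discrete_difference[where X="{0}"]) auto
  have "(LINT s:{0..}|lborel. ?g s) = half_line_Fourier \<phi> t"
    unfolding half_line_Fourier_def by (rule set_integral_discrete_difference[where X="{0}"]) auto
  then have "((\<lambda>R. LINT s:{0..R}|lborel. ?g s) \<longlongrightarrow> half_line_Fourier \<phi> t) at_top"
    using tendsto_set_lebesgue_integral_at_top[OF _ int] by simp
  moreover have "((\<lambda>R. exp (\<i> * of_real (R * t)) * of_real (\<phi> R)) \<longlongrightarrow> 0) at_top"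
    by (rule Lim_null_comparison[OF _ tendsto_rabs_zero[OF \<phi>(3)]]) (simp add: norm_mult)
  ultimately have "((\<lambda>R. exp (\<i> * of_real (R * t)) * of_real (\<phi> R) - of_real (\<phi> 0)
      - \<i> * of_real t * (LINT s:{0..R}|lborel. ?g s))
      \<longlongrightarrow> 0 - of_real (\<phi> 0) - \<i> * of_real t * half_line_Fourier \<phi> t) at_top"
    by (intro tendsto_intros)
  moreover have "\<forall>\<^sub>F R in at_top. exp (\<i> * of_real (R * t)) * of_real (\<phi> R) - of_real (\<phi> 0)
      - \<i> * of_real t * (LINT s:{0..R}|lborel. ?g s) = RS_integral (\<lambda>x. exp (\<i> * of_real (x * t))) \<phi> 0 R"
    using eventually_gt_at_top[of 0]
    by eventually_elim (rule RS_integral_exp_ii[symmetric], auto intro: continuous_on_subset[OF \<phi>(1)])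
  ultimately have "((\<lambda>R. RS_integral (\<lambda>x. exp (\<i> * of_real (x * t))) \<phi> 0 R)
      \<longlongrightarrow> - of_real (\<phi> 0) - \<i> * of_real t * half_line_Fourier \<phi> t) at_top"
    by (simp add: Lim_transform_eventually)
  then show ?thesis
    unfolding FS_transform_def by (rule tendsto_Lim[rotated]) simp
qed

section \<open>Abel means\<close>

lemma tendsto_Abel_means:
  fixes G :: "real \<Rightarrow> 'a::{banach, second_countable_topology}"
  assumes [measurable]: "G \<in> borel_measurable borel"
    and bound: "\<And>t. t \<ge> 0 \<Longrightarrow> norm (G t) \<le> K" and lim: "(G \<longlongrightarrow> c) at_top"
  shows "(\<lambda>n. LINT s:{0<..}|lborel. exp (-s) *\<^sub>R G (s * real (Suc n))) \<longlonglongrightarrow> c"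
proof -
  have "(\<lambda>n. \<integral>s. indicator {0<..} s *\<^sub>R (exp (-s) *\<^sub>R G (s * real (Suc n))) \<partial>lborel)
      \<longlonglongrightarrow> (\<integral>s. indicator {0<..} s *\<^sub>R (exp (-s) *\<^sub>R c) \<partial>lborel)"
  proof (rule integral_dominated_convergence[where w="\<lambda>s. indicator {0<..} s * exp (-s) * K"])
    show "integrable lborel (\<lambda>s. indicator {0<..} s * exp (-s) * K)"
      using set_integral_exp_neg(1) unfolding set_integrable_def by (intro integrable_mult_left) simp
    show "AE s in lborel. (\<lambda>n. indicator {0<..} s *\<^sub>R (exp (-s) *\<^sub>R G (s * real (Suc n))))
       \<longlonglongrightarrow> indicator {0<..} s *\<^sub>R (exp (-s) *\<^sub>R c)"
    proof (intro AE_I2)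
      fix s :: real
      show "(\<lambda>n. indicator {0<..} s *\<^sub>R (exp (-s) *\<^sub>R G (s * real (Suc n))))
       \<longlonglongrightarrow> indicator {0<..} s *\<^sub>R (exp (-s) *\<^sub>R c)"
      proof (cases "s > 0")
        case True
        have "filterlim (\<lambda>n. s * real (Suc n)) at_top sequentially"
          using True by (intro filterlim_tendsto_pos_mult_at_top[OF tendsto_const True])
             (simp add: filterlim_Suc filterlim_compose[OF filterlim_real_sequentially] del: of_nat_Suc)
        with lim have "(\<lambda>n. G (s * real (Suc n))) \<longlonglongrightarrow> c"
          by (rule filterlim_compose)
        then show ?thesis by (intro tendsto_intros)
      qed simp
    qed
    show "AE s in lborel. norm (indicator {0<..} s *\<^sub>R (exp (-s) *\<^sub>R G (s * real (Suc n))))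
        \<le> indicator {0<..} s * exp (-s) * K" for n
      using bound[of "s * real (Suc n)" for s] by (intro AE_I2) (auto simp: indicator_def)
  qed measurable
  also have "(\<integral>s. indicator {0<..} s *\<^sub>R (exp (-s) *\<^sub>R c) \<partial>lborel) = (LINT s:{0<..}|lborel. exp (-s)) *\<^sub>R c"
    unfolding set_lebesgue_integral_def using set_integral_exp_neg(1) unfolding set_integrable_def
    by (subst integral_scaleR_left[symmetric]) (auto intro!: Bochner_Integration.integral_cong)
  also have "\<dots> = c"
    using set_integral_exp_neg(2) by simp
  finally show ?thesis
    unfolding set_lebesgue_integral_def .
qed

lemma set_integrable_dilation_Ioi:
  fixes \<psi> :: "real \<Rightarrow> real"
  assumes "set_integrable lborel {0<..} \<psi>" "m > 0"
  shows "set_integrable lborel {0<..} (\<lambda>y. \<psi> (y / m))"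
proof -
  have "integrable lborel (\<lambda>y. indicator {0<..} (0 + 1/m * y) *\<^sub>R \<psi> (0 + 1/m * y))"
    using assms by (intro lborel_integrable_real_affine) (auto simp: set_integrable_def)
  moreover have "(\<lambda>y. indicator {0<..} (0 + 1/m * y) *\<^sub>R \<psi> (0 + 1/m * y)) = (\<lambda>y. indicator {0<..} y *\<^sub>R \<psi> (y / m))"
    using assms(2) by (auto simp: fun_eq_iff indicator_def zero_less_mult_iff zero_less_divide_iff)
  ultimately show ?thesis
    unfolding set_integrable_def by simp
qed

lemma integral_mult_exp_neg_half_line_Fourier:
  fixes g :: "real \<Rightarrow> real"
  assumes [measurable]: "g \<in> borel_measurable borel" and int: "set_integrable lborel {0<..} g"
  shows "(LINT s:{0<..}|lborel. of_real (s * exp (-s)) * half_line_Fourier g s)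
       = (LINT y:{0<..}|lborel. of_real (g y) * (1 / (1 - \<i> * of_real y)^2))"
proof -
  define h where "h s y = of_real (indicator {0<..} s * s * exp (-s)) *
      (indicator {0<..} y *\<^sub>R (of_real (g y) * exp (\<i> * of_real (y * s))))" for s y :: real
  have [measurable]: "(\<lambda>(s, y). h s y) \<in> borel_measurable (lborel \<Otimes>\<^sub>M lborel)"
    unfolding h_def case_prod_beta' by measurable
  have inner_y: "(\<integral>y. h s y \<partial>lborel) = indicator {0<..} s *\<^sub>R (of_real (s * exp (-s)) * half_line_Fourier g s)" for s
    unfolding h_def half_line_Fourier_def set_lebesgue_integral_def
    by (subst integral_mult_right_zero) (simp add: indicator_def)
  have inner_s: "(\<integral>s. h s y \<partial>lborel) = indicator {0<..} y *\<^sub>R (of_real (g y) * (1 / (1 - \<i> * of_real y)^2))" for y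
  proof -
    have "(\<lambda>s. h s y) = (\<lambda>s. (indicator {0<..} y *\<^sub>R of_real (g y)) *
        (indicator {0<..} s *\<^sub>R (of_real (s * exp (-s)) * exp (\<i> * of_real (y * s)))))"
      by (auto simp: h_def indicator_def fun_eq_iff)
    then show ?thesis
      unfolding set_integral_mult_exp_neg_exp_ii[symmetric] set_lebesgue_integral_def
      by (simp add: scaleR_conv_of_real)
  qed
  have "integrable (lborel \<Otimes>\<^sub>M lborel) (\<lambda>(s, y). h s y)"
  proof (rule lborel_pair.Fubini_integrable)
    define C where "C = (\<integral>y. indicator {0<..} y * \<bar>g y\<bar> \<partial>lborel)"
    have "(\<integral>y. norm ((\<lambda>(s, y). h s y) (s, y)) \<partial>lborel)
        = (\<integral>y. (indicator {0<..} s * (s * exp (-s))) * (indicator {0<..} y * \<bar>g y\<bar>) \<partial>lborel)" for s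
      by (rule Bochner_Integration.integral_cong) (auto simp: h_def norm_mult indicator_def abs_mult)
    also have "\<dots> s = (indicator {0<..} s * (s * exp (-s))) * C" for s
      unfolding C_def by (rule integral_mult_right_zero)
    finally show "integrable lborel (\<lambda>s. \<integral>y. norm ((\<lambda>(s, y). h s y) (s, y)) \<partial>lborel)"
      using set_integrable_mult_exp_neg unfolding set_integrable_def by (simp add: integrable_mult_left)
    have "integrable lborel (\<lambda>y. indicator {0<..} y *\<^sub>R (of_real (g y) * exp (\<i> * of_real (y * s))))" for s
      using int unfolding set_integrable_def
      by (rule Bochner_Integration.integrable_bound) (auto simp: norm_mult indicator_def)
    then show "AE s in lborel. integrable lborel (\<lambda>y. (\<lambda>(s, y). h s y) (s, y))"
      unfolding h_def case_prod_conv by (intro AE_I2 integrable_mult_right)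
  qed measurable
  then have "(\<integral>s. (\<integral>y. h s y \<partial>lborel) \<partial>lborel) = (\<integral>y. (\<integral>s. h s y \<partial>lborel) \<partial>lborel)"
    by (rule lborel_pair.Fubini_integral[symmetric])
  then show ?thesis
    unfolding set_lebesgue_integral_def inner_y inner_s .
qed

lemma half_line_Fourier_Abel_identity:
  fixes \<psi> :: "real \<Rightarrow> real"
  assumes [measurable]: "\<psi> \<in> borel_measurable borel" and "set_integrable lborel {0<..} \<psi>" "m > 0"
  shows "(LINT s:{0<..}|lborel. exp (-s) *\<^sub>R (of_real (s * m) * half_line_Fourier \<psi> (s * m)))
       = (LINT y:{0<..}|lborel. of_real (\<psi> (y / m)) * (1 / (1 - \<i> * of_real y)^2))"
proof -
  have "exp (-s) *\<^sub>R (of_real (s * m) * half_line_Fourier \<psi> (s * m))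
      = of_real (s * exp (-s)) * half_line_Fourier (\<lambda>y. \<psi> (y / m)) s" for s
    using \<open>m > 0\<close> by (simp add: half_line_Fourier_scale scaleR_conv_of_real)
  then show ?thesis
    using integral_mult_exp_neg_half_line_Fourier[OF _ set_integrable_dilation_Ioi[OF assms(2,3)]] by simp
qed

lemma tendsto_integral_dilation:
  fixes \<psi> :: "real \<Rightarrow> real" and k :: "real \<Rightarrow> complex"
  assumes [measurable]: "\<psi> \<in> borel_measurable borel" and "isCont \<psi> 0"
    and bound: "\<And>x. x \<ge> 0 \<Longrightarrow> \<bar>\<psi> x\<bar> \<le> M" and k: "set_integrable lborel {0<..} k"
  shows "(\<lambda>n. LINT y:{0<..}|lborel. of_real (\<psi> (y / real (Suc n))) * k y)
      \<longlonglongrightarrow> of_real (\<psi> 0) * (LINT y:{0<..}|lborel. k y)"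
proof -
  let ?k = "\<lambda>y. indicator {0<..} y *\<^sub>R k y"
  have [measurable]: "?k \<in> borel_measurable lborel"
    using k unfolding set_integrable_def by (rule borel_measurable_integrable)
  have "(\<lambda>n. \<integral>y. of_real (\<psi> (y / real (Suc n))) * ?k y \<partial>lborel) \<longlonglongrightarrow> (\<integral>y. of_real (\<psi> 0) * ?k y \<partial>lborel)"
  proof (rule integral_dominated_convergence[where w="\<lambda>y. M * norm (?k y)"])
    show "integrable lborel (\<lambda>y. M * norm (?k y))"
      using k unfolding set_integrable_def by (intro integrable_mult_right integrable_norm)
    have "(\<lambda>n. \<psi> (y / real (Suc n))) \<longlonglongrightarrow> \<psi> 0" for y
    proof -
      have "(\<lambda>n. y / real (Suc n)) \<longlonglongrightarrow> 0"
        by real_asymp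
      with \<open>isCont \<psi> 0\<close> show ?thesis
        using isCont_tendsto_compose by blast
    qed
    then show "AE y in lborel. (\<lambda>n. of_real (\<psi> (y / real (Suc n))) * ?k y) \<longlonglongrightarrow> of_real (\<psi> 0) * ?k y"
      by (intro AE_I2 tendsto_intros)
    show "AE y in lborel. norm (of_real (\<psi> (y / real (Suc n))) * ?k y) \<le> M * norm (?k y)" for n
    proof (rule AE_I2)
      fix y :: real
      show "norm (of_real (\<psi> (y / real (Suc n))) * ?k y) \<le> M * norm (?k y)"
      proof (cases "y > 0")
        case True
        then have "\<bar>\<psi> (y / real (Suc n))\<bar> \<le> M"
          by (intro bound) simp
        then show ?thesis
          unfolding norm_mult norm_of_real by (rule mult_right_mono) simp
      qed simp
    qed
  qed measurable
  moreover have "(\<integral>y. z y * ?k y \<partial>lborel) = (LINT y:{0<..}|lborel. z y * k y)" for z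
    unfolding set_lebesgue_integral_def by (rule Bochner_Integration.integral_cong) (auto simp: indicator_def)
  ultimately show ?thesis
    unfolding integral_mult_right_zero set_lebesgue_integral_def[of _ _ k] by simp
qed

lemma bounded_mult_half_line_Fourier:
  assumes int: "set_integrable lborel {0<..} \<psi>"
    and lim: "((\<lambda>t. of_real t * half_line_Fourier \<psi> t) \<longlongrightarrow> c) at_top"
  obtains K where "\<And>t. t \<ge> 0 \<Longrightarrow> norm (of_real t * half_line_Fourier \<psi> t) \<le> K"
proof -
  obtain T where T: "\<And>t. t \<ge> T \<Longrightarrow> dist (of_real t * half_line_Fourier \<psi> t) c < 1"
    using lim[unfolded tendsto_iff, rule_format, of 1] unfolding eventually_at_top_linorder by auto
  define N where "N = (LINT x:{0<..}|lborel. \<bar>\<psi> x\<bar>)"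
  show ?thesis
  proof
    fix t :: real assume "t \<ge> 0"
    show "norm (of_real t * half_line_Fourier \<psi> t) \<le> max (norm c + 1) (max T 0 * N)"
    proof (cases "t \<ge> T")
      case True
      then have "norm (of_real t * half_line_Fourier \<psi> t) \<le> norm c + 1"
        using T[of t] norm_triangle_ineq2[of "of_real t * half_line_Fourier \<psi> t" c] by (simp add: dist_norm)
      then show ?thesis
        by linarith
    next
      case False
      with \<open>t \<ge> 0\<close> have "norm (of_real t * half_line_Fourier \<psi> t) \<le> max T 0 * N"
        unfolding N_def norm_mult
        by (intro mult_mono norm_half_line_Fourier_le[OF int]) (auto intro: order_trans[OF norm_ge_zero])
      then show ?thesis
        by linarith
    qed
  qed
qed

lemma tendsto_mult_half_line_Fourier_imp:
  fixes \<psi> :: "real \<Rightarrow> real" and c :: complex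
  assumes \<psi>: "continuous_on {0..} \<psi>" "set_integrable lborel {0<..} \<psi>"
    and bound: "\<And>x. x \<ge> 0 \<Longrightarrow> \<bar>\<psi> x\<bar> \<le> M"
    and lim: "((\<lambda>t. of_real t * half_line_Fourier \<psi> t) \<longlongrightarrow> c) at_top"
  shows "c = \<i> * of_real (\<psi> 0)"
proof -
  define \<psi>' where "\<psi>' x = \<psi> (max 0 x)" for x
  have \<psi>'_eq: "\<psi>' x = \<psi> x" if "x \<ge> 0" for x
    using that by (simp add: \<psi>'_def)
  have "continuous_on UNIV \<psi>'"
    unfolding \<psi>'_def by (rule continuous_on_compose2[OF \<psi>(1)]) (auto intro!: continuous_intros)
  then have meas [measurable]: "\<psi>' \<in> borel_measurable borel" and cont: "isCont \<psi>' 0"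
    by (simp_all add: borel_measurable_continuous_onI continuous_on_eq_continuous_at)
  have int: "set_integrable lborel {0<..} \<psi>'"
    using \<psi>(2) by (subst set_integrable_cong[OF refl refl, of _ _ \<psi>]) (auto simp: \<psi>'_eq)
  have "half_line_Fourier \<psi>' = half_line_Fourier \<psi>"
    unfolding half_line_Fourier_def by (intro ext set_lebesgue_integral_cong) (auto simp: \<psi>'_eq)
  with lim have lim': "((\<lambda>t. of_real t * half_line_Fourier \<psi>' t) \<longlongrightarrow> c) at_top"
    by simp
  obtain K where "\<And>t. t \<ge> 0 \<Longrightarrow> norm (of_real t * half_line_Fourier \<psi>' t) \<le> K"
    using bounded_mult_half_line_Fourier[OF int lim'] by blast
  then have "(\<lambda>n. LINT s:{0<..}|lborel. exp (-s) *\<^sub>R (of_real (s * Suc n) * half_line_Fourier \<psi>' (s * Suc n)))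
      \<longlonglongrightarrow> c"
    using lim' half_line_Fourier_measurable[OF meas] by (intro tendsto_Abel_means) auto
  moreover have "(LINT s:{0<..}|lborel. exp (-s) *\<^sub>R (of_real (s * Suc n) * half_line_Fourier \<psi>' (s * Suc n)))
      = (LINT y:{0<..}|lborel. of_real (\<psi>' (y / Suc n)) * (1 / (1 - \<i> * of_real y)^2))" for n
    by (rule half_line_Fourier_Abel_identity[OF meas int]) simp
  ultimately have "(\<lambda>n. LINT y:{0<..}|lborel. of_real (\<psi>' (y / Suc n)) * (1 / (1 - \<i> * of_real y)^2)) \<longlonglongrightarrow> c"
    by simp
  moreover have "\<bar>\<psi>' x\<bar> \<le> M" if "x \<ge> 0" for x
    using bound[OF that] by (simp add: \<psi>'_eq[OF that])
  then have "(\<lambda>n. LINT y:{0<..}|lborel. of_real (\<psi>' (y / Suc n)) * (1 / (1 - \<i> * of_real y)^2))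
      \<longlonglongrightarrow> of_real (\<psi>' 0) * \<i>"
    using tendsto_integral_dilation[OF meas cont _ set_integrable_inverse_square_one_minus_ii]
    unfolding set_integral_inverse_square_one_minus_ii by blast
  ultimately show ?thesis
    using LIMSEQ_unique by (fastforce simp: \<psi>'_eq)
qed

lemma bounded_on_atLeast_if_tendsto:
  fixes f :: "real \<Rightarrow> 'b::real_normed_vector"
  assumes "continuous_on {a..} f" "(f \<longlongrightarrow> l) at_top"
  obtains M where "\<And>x. x \<ge> a \<Longrightarrow> norm (f x) \<le> M"
proof -
  obtain T where T: "\<And>x. x \<ge> T \<Longrightarrow> dist (f x) l < 1"
    using assms(2)[unfolded tendsto_iff, rule_format, of 1] unfolding eventually_at_top_linorder by auto
  have "compact (f ` {a..max a T})"
    by (intro compact_continuous_image continuous_on_subset[OF assms(1)]) auto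
  then obtain B where B: "\<forall>x\<in>{a..max a T}. norm (f x) \<le> B"
    by (auto dest!: compact_imp_bounded simp: bounded_iff)
  show ?thesis
  proof
    fix x assume "x \<ge> a"
    show "norm (f x) \<le> max (norm l + 1) B"
    proof (cases "x \<ge> T")
      case True
      then show ?thesis
        using T[of x] norm_triangle_ineq2[of "f x" l] by (simp add: dist_norm)
    next
      case False
      then have "norm (f x) \<le> B"
        using B \<open>x \<ge> a\<close> by simp
      then show ?thesis by simp
    qed
  qed
qed

theorem theorem1:
  fixes \<phi> :: "real \<Rightarrow> real"
  assumes "continuous_on {0..} \<phi>"
    and "set_integrable lborel {0<..} \<phi>"
    and "has_bounded_variation_on \<phi> {0..}"
    and "(\<phi> \<longlongrightarrow> 0) at_top"
  shows "(FS_transform \<phi> \<longlongrightarrow> 0) at_infinity \<longleftrightarrow>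
         (\<exists>L. (FS_transform \<phi> \<longlongrightarrow> L) at_infinity)"
proof
  assume "\<exists>L. (FS_transform \<phi> \<longlongrightarrow> L) at_infinity"
  then obtain L where L: "(FS_transform \<phi> \<longlongrightarrow> L) at_infinity" ..
  obtain M where M: "\<And>x. x \<ge> 0 \<Longrightarrow> \<bar>\<phi> x\<bar> \<le> M"
    using bounded_on_atLeast_if_tendsto[OF assms(1,4)] by (metis real_norm_def)
  have "of_real t * half_line_Fourier \<phi> t = \<i> * (FS_transform \<phi> t + of_real (\<phi> 0))" for t
    unfolding FS_transform_eq_half_line_Fourier[OF assms(1,2,4)] by (simp add: algebra_simps)
  moreover have "(FS_transform \<phi> \<longlongrightarrow> L) at_top"
    using L by (rule filterlim_mono[OF _ order_refl at_top_le_at_infinity])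
  ultimately have "((\<lambda>t. of_real t * half_line_Fourier \<phi> t) \<longlongrightarrow> \<i> * (L + of_real (\<phi> 0))) at_top"
    by (simp add: tendsto_intros)
  then have "\<i> * (L + of_real (\<phi> 0)) = \<i> * of_real (\<phi> 0)"
    using tendsto_mult_half_line_Fourier_imp[OF assms(1,2) M] by blast
  with L show "(FS_transform \<phi> \<longlongrightarrow> 0) at_infinity"
    by simp
qed blast

end
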